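(* Let $G$ be a quadrangulation graph with $n$ vertices and minimum degree $\delta(G)=3$. Let $v$ be a vertex of degree $3$ with $N(v)=\{v_1,v_2,v_3\}$, and let $v_4,v_5,v_6$ be the vertices such that $v_1vv_3v_4v_1$, $v_2vv_3v_5v_2$ and $v_1vv_2v_6v_1$ are the three faces incident to $v$. Suppose $v$ is a good vertex, i.e. none of $e_1=\{v_1,v_5\}$, $e_2=\{v_2,v_4\}$, $e_3=\{v_3,v_6\}$ is an edge of $G$. For $i\in\{1,2,3\}$ let $G_i$ be the quadrangulation graph obtained from $G$ by deleting $v$ and adding the edge $e_i$, and define \[ \mathrm{dec}(G,G_i)=\sum_{\{u,w\}\subseteq V(G)\setminus\{v\}}\bigl(d_G(u,w)-d_{G_i}(u,w)\bigr), \] the sum being over unordered pairs of distinct vertices. Then \[ \min_{i\in\{1,2,3\}} \mathrm{dec}(G,G_i)\leq \frac{(n-1)^2}{18}. \]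
   Context: A quadrangulation graph is a simple plane graph (a planar graph together with a fixed embedding in the plane) in which every face, including the unbounded one, is bounded by a cycle of length 4. $N(v)$ denotes the set of neighbours of $v$, $\delta(G)$ the minimum degree, and $d_H(u,w)$ the shortest-path distance in a graph $H$. *)

theory Defs
  imports Complex_Main
begin

definition simple_graph :: "'a set \<Rightarrow> ('a \<Rightarrow> 'a \<Rightarrow> bool) \<Rightarrow> bool" where
  "simple_graph V E \<longleftrightarrow> finite V \<and> (\<forall>x y. E x y \<longrightarrow> x \<in> V \<and> y \<in> V)
     \<and> (\<forall>x y. E x y \<longrightarrow> E y x) \<and> (\<forall>x. \<not> E x x)"

definition nbrs :: "('a \<Rightarrow> 'a \<Rightarrow> bool) \<Rightarrow> 'a \<Rightarrow> 'a set" where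
  "nbrs E x = {y. E x y}"

definition edges :: "('a \<Rightarrow> 'a \<Rightarrow> bool) \<Rightarrow> 'a set set" where
  "edges E = {{x, y} | x y. E x y}"

definition connected_graph :: "'a set \<Rightarrow> ('a \<Rightarrow> 'a \<Rightarrow> bool) \<Rightarrow> bool" where
  "connected_graph V E \<longleftrightarrow> (\<forall>u\<in>V. \<forall>w\<in>V. \<exists>k. (E ^^ k) u w)"

definition gdist :: "('a \<Rightarrow> 'a \<Rightarrow> bool) \<Rightarrow> 'a \<Rightarrow> 'a \<Rightarrow> nat" where
  "gdist E u w = (LEAST k. (E ^^ k) u w)"

text \<open>Combinatorial embedding (rotation system): for every vertex x,
  rot x is a cyclic permutation of the neighbourhood of x.\<close>

definition rotation_system :: "'a set \<Rightarrow> ('a \<Rightarrow> 'a \<Rightarrow> bool) \<Rightarrow> ('a \<Rightarrow> 'a \<Rightarrow> 'a) \<Rightarrow> bool" where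
  "rotation_system V E rot \<longleftrightarrow> (\<forall>x\<in>V. bij_betw (rot x) (nbrs E x) (nbrs E x)
      \<and> (\<forall>y\<in>nbrs E x. \<forall>z\<in>nbrs E x. \<exists>k. (rot x ^^ k) y = z))"

definition darts :: "('a \<Rightarrow> 'a \<Rightarrow> bool) \<Rightarrow> ('a \<times> 'a) set" where
  "darts E = {(u, w). E u w}"

definition fsucc :: "('a \<Rightarrow> 'a \<Rightarrow> 'a) \<Rightarrow> 'a \<times> 'a \<Rightarrow> 'a \<times> 'a" where
  "fsucc rot d = (snd d, rot (snd d) (fst d))"

definition face_of :: "('a \<Rightarrow> 'a \<Rightarrow> 'a) \<Rightarrow> 'a \<times> 'a \<Rightarrow> ('a \<times> 'a) set" where
  "face_of rot d = {(fsucc rot ^^ k) d | k. True}"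

definition faces :: "('a \<Rightarrow> 'a \<Rightarrow> bool) \<Rightarrow> ('a \<Rightarrow> 'a \<Rightarrow> 'a) \<Rightarrow> ('a \<times> 'a) set set" where
  "faces E rot = face_of rot ` darts E"

text \<open>A plane (i.e. spherical, genus 0) embedding of a connected graph:
  a rotation system satisfying Euler's formula V - E + F = 2.\<close>
definition plane_embedding :: "'a set \<Rightarrow> ('a \<Rightarrow> 'a \<Rightarrow> bool) \<Rightarrow> ('a \<Rightarrow> 'a \<Rightarrow> 'a) \<Rightarrow> bool" where
  "plane_embedding V E rot \<longleftrightarrow> simple_graph V E \<and> connected_graph V E
     \<and> rotation_system V E rot
     \<and> int (card V) - int (card (edges E)) + int (card (faces E rot)) = 2"

definition quadrangulation :: "'a set \<Rightarrow> ('a \<Rightarrow> 'a \<Rightarrow> bool) \<Rightarrow> ('a \<Rightarrow> 'a \<Rightarrow> 'a) \<Rightarrow> bool" where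
  "quadrangulation V E rot \<longleftrightarrow> plane_embedding V E rot
     \<and> (\<forall>d\<in>darts E. (fsucc rot ^^ 4) d = d
           \<and> distinct [fst d, fst (fsucc rot d), fst ((fsucc rot ^^ 2) d), fst ((fsucc rot ^^ 3) d)])"

definition face_walk :: "('a \<Rightarrow> 'a \<Rightarrow> 'a) \<Rightarrow> 'a \<Rightarrow> 'a \<Rightarrow> 'a \<Rightarrow> 'a \<Rightarrow> bool" where
  "face_walk rot a b c d \<longleftrightarrow>
     face_of rot (a, b) = {(a, b), (b, c), (c, d), (d, a)}
   \<or> face_of rot (d, c) = {(d, c), (c, b), (b, a), (a, d)}"

definition del_add :: "('a \<Rightarrow> 'a \<Rightarrow> bool) \<Rightarrow> 'a \<Rightarrow> 'a \<Rightarrow> 'a \<Rightarrow> 'a \<Rightarrow> 'a \<Rightarrow> bool" where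
  "del_add E v a b x y \<longleftrightarrow> (x \<noteq> v \<and> y \<noteq> v \<and> E x y) \<or> (x = a \<and> y = b) \<or> (x = b \<and> y = a)"

text \<open>dec(G,G') summed over unordered pairs of distinct vertices of V - {v}
  (= half the sum over ordered pairs; diagonal terms vanish).\<close>
definition dec :: "'a set \<Rightarrow> 'a \<Rightarrow> ('a \<Rightarrow> 'a \<Rightarrow> bool) \<Rightarrow> ('a \<Rightarrow> 'a \<Rightarrow> bool) \<Rightarrow> real" where
  "dec V v E E' = (\<Sum>u\<in>V - {v}. \<Sum>w\<in>V - {v}. real (gdist E u w) - real (gdist E' u w)) / 2"

end

theory Submission
  imports Defs
begin

text \<open>
  Deleting v and adding e = ab only adds the walks through ab, and d(a,b) \<le> 3. Plane
  quadrangulations are bipartite with a and b in different classes, so by parity a geodesic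
  between x and y shrinks by at most 2, and only when d(x,b) = d(x,a) + 3 and
  d(y,a) = d(y,b) + 3 or vice versa. Hence dec(G,G_i) \<le> 2 p_i q_i, where p_i and q_i count
  the vertices on the two far sides of e_i. Any two of the six hexagon vertices v1 .. v6
  not joined by some e_i are within distance 2, which makes the six far sides pairwise
  disjoint; so \<Sum> (p_i + q_i) \<le> n - 1, and AM-GM gives the bound.

  Bipartiteness comes from Euler's formula: the boundaries of sets of faces are even
  subgraphs of even size, and a dimension count shows that modulo a BFS tree they realise
  every set of non-tree edges. An edge joining two BFS levels of equal parity would then be
  the only edge of such a boundary not crossing between odd and even levels, contradicting
  the handshake lemma.
\<close>

lemma relpowp_sym:
  assumes "symp R" and "(R ^^ k) x y"
  shows "(R ^^ k) y x"
  using assms(2)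
proof (induction k arbitrary: y)
  case 0
  then show ?case by simp
next
  case (Suc k)
  then obtain z where "(R ^^ k) x z" "R z y" by (auto elim: relpowp_Suc_E)
  with Suc.IH assms(1) show ?case by (meson relpowp_Suc_I2 sympD)
qed

lemma gdist_le: "(R ^^ k) x y \<Longrightarrow> gdist R x y \<le> k"
  unfolding gdist_def by (rule Least_le)

lemma relpowp_gdist: "\<exists>k. (R ^^ k) x y \<Longrightarrow> (R ^^ gdist R x y) x y"
  unfolding gdist_def by (rule LeastI_ex)

lemma even_card_disagreements:
  fixes f :: "'a \<Rightarrow> bool"
  assumes "finite N" and "bij_betw \<sigma> N N"
  shows "even (card {y\<in>N. f y \<noteq> f (\<sigma> y)})"
proof -
  define X where "X = {y\<in>N. f y}"
  define Y where "Y = {y\<in>N. f (\<sigma> y)}"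
  have "\<sigma> ` Y = X" "inj_on \<sigma> Y"
    using assms(2) unfolding X_def Y_def bij_betw_def by (auto intro: inj_on_subset)
  then have card_eq: "card X = card Y" by (metis card_image)
  have fin: "finite X" "finite Y" using assms(1) unfolding X_def Y_def by auto
  have "{y\<in>N. f y \<noteq> f (\<sigma> y)} = (X - Y) \<union> (Y - X)" unfolding X_def Y_def by auto
  moreover have "card ((X - Y) \<union> (Y - X)) = card (X - Y) + card (Y - X)"
    using fin by (intro card_Un_disjoint) auto
  moreover have "card (X - Y) = card X - card (X \<inter> Y)" "card (Y - X) = card Y - card (X \<inter> Y)"
    using fin by (simp_all add: card_Diff_subset_Int Int_commute)
  ultimately show ?thesis using card_eq by simp
qed

lemma sum_list_card_Int_le:
  assumes "finite W" and "sorted_wrt disjnt As"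
  shows "(\<Sum>A\<leftarrow>As. card (W \<inter> A)) \<le> card W"
  using assms
proof (induction As arbitrary: W)
  case Nil
  then show ?case by simp
next
  case (Cons A As)
  have "(\<Sum>B\<leftarrow>As. card (W \<inter> B)) = (\<Sum>B\<leftarrow>As. card ((W - A) \<inter> B))"
    using Cons.prems(2)
    by (intro arg_cong[where f = sum_list] map_cong refl arg_cong[where f = card])
      (auto simp: disjnt_def)
  also have "\<dots> \<le> card (W - A)" using Cons by simp
  finally show ?case using card_Int_Diff[OF Cons.prems(1), of A] by simp
qed

lemma two_mult_le_sum_square:
  fixes p q s :: real
  assumes "0 \<le> p" "0 \<le> q" "p + q \<le> s"
  shows "2 * p * q \<le> s\<^sup>2 / 2"
proof -
  have "4 * p * q \<le> (p + q)\<^sup>2" using sum_squares_ge_zero[of "p - q" 0]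
    by (simp add: power2_eq_square algebra_simps)
  also have "\<dots> \<le> s\<^sup>2" using assms by (intro power_mono) auto
  finally show ?thesis by simp
qed

lemma min_three_products_le:
  fixes p1 q1 p2 q2 p3 q3 N :: real
  assumes "0 \<le> p1" "0 \<le> q1" "0 \<le> p2" "0 \<le> q2" "0 \<le> p3" "0 \<le> q3"
    and "p1 + q1 + p2 + q2 + p3 + q3 \<le> N"
  shows "min (2 * p1 * q1) (min (2 * p2 * q2) (2 * p3 * q3)) \<le> N\<^sup>2 / 18"
proof -
  have "(N / 3)\<^sup>2 / 2 = N\<^sup>2 / 18" by (simp add: power_divide)
  moreover consider "p1 + q1 \<le> N / 3" | "p2 + q2 \<le> N / 3" | "p3 + q3 \<le> N / 3"
    using assms(7) by linarith
  ultimately show ?thesis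
    by cases (use two_mult_le_sum_square assms in \<open>smt (verit)\<close>)+
qed

definition edge_degree :: "'a set set \<Rightarrow> 'a \<Rightarrow> nat" where
  "edge_degree A z = card {y. {z, y} \<in> A}"

definition even_degree :: "'a set set \<Rightarrow> bool" where
  "even_degree A \<longleftrightarrow> (\<forall>z. even (edge_degree A z))"

section \<open>Distances in connected graphs\<close>

locale connected_simple_graph =
  fixes V :: "'a set" and E :: "'a \<Rightarrow> 'a \<Rightarrow> bool"
  assumes simple: "simple_graph V E" and connected: "connected_graph V E"
begin

lemma finite_V: "finite V"
  using simple unfolding simple_graph_def by blast

lemma edge_in_V: "E x y \<Longrightarrow> x \<in> V \<and> y \<in> V"
  using simple unfolding simple_graph_def by blast

lemma edge_sym: "E x y \<Longrightarrow> E y x"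
  using simple unfolding simple_graph_def by blast

lemma edge_irrefl: "\<not> E x x"
  using simple unfolding simple_graph_def by blast

lemma doubleton_in_edges_iff: "{x, y} \<in> edges E \<longleftrightarrow> E x y"
  unfolding edges_def by (auto simp: doubleton_eq_iff edge_sym)

lemma edgesE:
  assumes "e \<in> edges E"
  obtains u w where "e = {u, w}" "E u w"
  using assms unfolding edges_def by blast

lemma finite_edges: "finite (edges E)"
proof -
  have "edges E = (\<lambda>(u, w). {u, w}) ` {(u, w). E u w}" unfolding edges_def by auto
  moreover have "{(u, w). E u w} \<subseteq> V \<times> V" using edge_in_V by auto
  ultimately show ?thesis using finite_V by (metis finite_SigmaI finite_imageI finite_subset)
qed

abbreviation d :: "'a \<Rightarrow> 'a \<Rightarrow> nat" where "d \<equiv> gdist E"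

lemma walk_exists: "x \<in> V \<Longrightarrow> y \<in> V \<Longrightarrow> \<exists>k. (E ^^ k) x y"
  using connected unfolding connected_graph_def by blast

lemma relpowp_gdist_V: "x \<in> V \<Longrightarrow> y \<in> V \<Longrightarrow> (E ^^ d x y) x y"
  by (rule relpowp_gdist[OF walk_exists])

lemma gdist_self: "d x x = 0"
  using gdist_le[where R = E and k = 0] by simp

lemma gdist_eq_0_imp_eq: "x \<in> V \<Longrightarrow> y \<in> V \<Longrightarrow> d x y = 0 \<Longrightarrow> x = y"
  using relpowp_gdist_V[of x y] by simp

lemma gdist_sym: "x \<in> V \<Longrightarrow> y \<in> V \<Longrightarrow> d x y = d y x"
  by (meson antisym edge_sym gdist_le relpowp_gdist_V relpowp_sym sympI)

lemma gdist_triangle: "x \<in> V \<Longrightarrow> y \<in> V \<Longrightarrow> z \<in> V \<Longrightarrow> d x z \<le> d x y + d y z"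
  by (meson gdist_le relpowp_gdist_V relpowp_trans)

lemma gdist_edge_step: "x \<in> V \<Longrightarrow> E y z \<Longrightarrow> d x z \<le> d x y + 1"
  by (metis edge_in_V gdist_le gdist_triangle relpowp_1 add_left_mono order_trans)

lemma gdist_edge: "E x y \<Longrightarrow> d x y \<le> 1"
  by (metis gdist_le relpowp_1)

lemma gdist_path2:
  assumes "E x y" "E y z"
  shows "d x z \<le> 2"
proof -
  have "(E ^^ Suc (Suc 0)) x z" using assms by (meson relpowp_0_I relpowp_Suc_I)
  then show ?thesis using gdist_le by (metis numeral_2_eq_2)
qed

lemma gdist_path3:
  assumes "E x y" "E y z" "E z w"
  shows "d x w \<le> 3"
proof -
  have "(E ^^ Suc (Suc (Suc 0))) x w" using assms by (meson relpowp_0_I relpowp_Suc_I)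
  then show ?thesis using gdist_le by (metis numeral_3_eq_3)
qed

lemma walk_with_extra_edge:
  assumes "a \<in> V" "b \<in> V" "x \<in> V"
    and extra: "\<And>u w. E' u w \<Longrightarrow> E u w \<or> (u = a \<and> w = b) \<or> (u = b \<and> w = a)"
    and "(E' ^^ k) x y"
  shows "y \<in> V \<and> (d x y \<le> k \<or> d x a + d b y + 1 \<le> k \<or> d x b + d a y + 1 \<le> k)"
  using assms(5)
proof (induction k arbitrary: y)
  case 0
  then show ?case using assms(3) by (simp add: gdist_self)
next
  case (Suc k)
  then obtain z where walk: "(E' ^^ k) x z" and step: "E' z y" by (auto elim: relpowp_Suc_E)
  note IH = Suc.IH[OF walk]
  from extra[OF step] consider "E z y" | "z = a" "y = b" | "z = b" "y = a" by blast
  then show ?case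
  proof cases
    case 1
    then have "d x y \<le> d x z + 1" "d b y \<le> d b z + 1" "d a y \<le> d a z + 1"
      using gdist_edge_step assms(1-3) by blast+
    then show ?thesis using IH edge_in_V[OF \<open>E z y\<close>] by auto
  qed (use IH assms(1,2) gdist_self in auto)
qed

lemma connected_graph_delete_vertex:
  assumes "w \<in> V - {v}" and "symp E'"
    and keep: "\<And>x y. E x y \<Longrightarrow> x \<noteq> v \<Longrightarrow> y \<noteq> v \<Longrightarrow> E' x y"
    and reroute: "\<And>u. E u v \<Longrightarrow> u \<noteq> w \<Longrightarrow> \<exists>k. (E' ^^ k) u w"
  shows "connected_graph (V - {v}) E'"
proof -
  have to_w: "\<exists>k. (E' ^^ k) x w" if "x \<in> V - {v}" for x
    using that
  proof (induction "d x w" arbitrary: x rule: less_induct)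
    case less
    show ?case
    proof (cases "x = w")
      case False
      then obtain m where m: "d x w = Suc m"
        using gdist_eq_0_imp_eq assms(1) less.prems by (cases "d x w") auto
      then have "(E ^^ Suc m) x w" using relpowp_gdist_V assms(1) less.prems by (metis DiffD1)
      then obtain z where z: "E x z" "(E ^^ m) z w" using relpowp_Suc_D2 by metis
      show ?thesis
      proof (cases "z = v")
        case True
        then show ?thesis using reroute z(1) False edge_sym by blast
      next
        case z_ne_v: False
        have "d z w < d x w" using gdist_le[OF z(2)] m by simp
        moreover have "z \<in> V - {v}" using z(1) z_ne_v edge_in_V by blast
        ultimately obtain k where "(E' ^^ k) z w" using less.hyps by blast
        moreover have "E' x z" using keep z(1) z_ne_v less.prems by blast
        ultimately show ?thesis by (meson relpowp_Suc_I2)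
      qed
    qed (meson relpowp_0_I)
  qed
  show ?thesis
    unfolding connected_graph_def
    by (metis to_w relpowp_sym[OF assms(2)] relpowp_trans)
qed

lemma edge_degree_eq_card:
  assumes "A \<subseteq> edges E"
  shows "edge_degree A z = card {e\<in>A. z \<in> e}"
proof -
  have inj: "inj_on (\<lambda>y. {z, y}) {y. {z, y} \<in> A}" by (rule inj_onI) (auto simp: doubleton_eq_iff)
  have img: "(\<lambda>y. {z, y}) ` {y. {z, y} \<in> A} = {e\<in>A. z \<in> e}"
  proof (intro equalityI subsetI)
    fix e assume e: "e \<in> {e\<in>A. z \<in> e}"
    then obtain u w where "e = {u, w}" using assms by (blast elim: edgesE)
    then have "e = {z, w} \<or> e = {z, u}" using e by auto
    then show "e \<in> (\<lambda>y. {z, y}) ` {y. {z, y} \<in> A}" using e by auto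
  qed auto
  show ?thesis unfolding edge_degree_def using card_image[OF inj] img by simp
qed

lemma even_card_edges_crossing:
  assumes "A \<subseteq> edges E" and "even_degree A" and "finite L"
  shows "even (card {e\<in>A. odd (card (e \<inter> L))})"
proof -
  have finA: "finite A" using assms(1) finite_edges finite_subset by blast
  have degree: "edge_degree A z = (\<Sum>e\<in>A. of_bool (z \<in> e))" for z
  proof -
    have "{e\<in>A. z \<in> e} = A \<inter> {e. z \<in> e}" by blast
    then show ?thesis using edge_degree_eq_card[OF assms(1), of z] finA by (simp add: Int_def)
  qed
  have crossing: "card (e \<inter> L) = (\<Sum>z\<in>L. of_bool (z \<in> e))" for e
  proof -
    have "e \<inter> L = L \<inter> {z. z \<in> e}" by blast
    then show ?thesis using assms(3) by (simp add: Int_def conj_commute)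
  qed
  have "(\<Sum>z\<in>L. edge_degree A z) = (\<Sum>z\<in>L. \<Sum>e\<in>A. of_bool (z \<in> e))"
    by (simp only: degree)
  also have "\<dots> = (\<Sum>e\<in>A. \<Sum>z\<in>L. of_bool (z \<in> e))" by (rule sum.swap)
  also have "\<dots> = (\<Sum>e\<in>A. card (e \<inter> L))" by (simp only: crossing)
  finally have "(\<Sum>z\<in>L. edge_degree A z) = (\<Sum>e\<in>A. card (e \<inter> L))" .
  moreover have "even (\<Sum>z\<in>L. edge_degree A z)"
    using assms(2) unfolding even_degree_def by (intro dvd_sum) auto
  ultimately show ?thesis using even_sum_iff[OF finA, of "\<lambda>e. card (e \<inter> L)"] by simp
qed

definition bfs_parent :: "'a \<Rightarrow> 'a \<Rightarrow> 'a" where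
  "bfs_parent r x = (SOME z. E x z \<and> d r z + 1 = d r x)"

definition bfs_tree :: "'a \<Rightarrow> 'a set set" where
  "bfs_tree r = (\<lambda>x. {x, bfs_parent r x}) ` (V - {r})"

definition odd_level :: "'a \<Rightarrow> 'a set" where
  "odd_level r = {z\<in>V. odd (d r z)}"

context
  fixes r assumes r_in_V: "r \<in> V"
begin

lemma bfs_parent_step:
  assumes "x \<in> V" "x \<noteq> r"
  shows "E x (bfs_parent r x) \<and> d r (bfs_parent r x) + 1 = d r x"
proof -
  obtain m where m: "d r x = Suc m"
    using gdist_eq_0_imp_eq[OF r_in_V assms(1)] assms(2) by (cases "d r x") auto
  then have "(E ^^ Suc m) r x" using relpowp_gdist_V[OF r_in_V assms(1)] by simp
  then obtain z where z: "(E ^^ m) r z" "E z x" by (auto elim: relpowp_Suc_E)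
  have "d r z \<le> m" using gdist_le[OF z(1)] .
  moreover have "d r x \<le> d r z + 1" using gdist_edge_step[OF r_in_V z(2)] .
  ultimately have "E x z \<and> d r z + 1 = d r x" using m z(2) edge_sym by auto
  then show ?thesis unfolding bfs_parent_def by (rule someI)
qed

lemma bfs_tree_subset_edges: "bfs_tree r \<subseteq> edges E"
  unfolding bfs_tree_def using bfs_parent_step doubleton_in_edges_iff by auto

lemma card_bfs_tree: "card (bfs_tree r) = card V - 1"
proof -
  have "inj_on (\<lambda>x. {x, bfs_parent r x}) (V - {r})"
  proof (rule inj_onI)
    fix x y assume x: "x \<in> V - {r}" and y: "y \<in> V - {r}"
      and eq: "{x, bfs_parent r x} = {y, bfs_parent r y}"
    show "x = y"
    proof (rule ccontr)
      assume "x \<noteq> y"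
      then have "x = bfs_parent r y" "y = bfs_parent r x" using eq by (auto simp: doubleton_eq_iff)
      then show False using bfs_parent_step[of x] bfs_parent_step[of y] x y by auto
    qed
  qed
  then show ?thesis unfolding bfs_tree_def using r_in_V finite_V by (simp add: card_image)
qed

text \<open>A vertex of maximal level in \<Union>B has degree 1 in B.\<close>
lemma even_degree_subset_bfs_tree:
  assumes "B \<subseteq> bfs_tree r" and "even_degree B"
  shows "B = {}"
proof (rule ccontr)
  have tree_edge: "\<exists>y. y \<in> V - {r} \<and> e = {y, bfs_parent r y}" if "e \<in> B" for e
    using that assms(1) unfolding bfs_tree_def by blast
  assume "B \<noteq> {}"
  then have "\<Union>B \<noteq> {}" using tree_edge by blast
  moreover have "\<Union>B \<subseteq> V" using tree_edge bfs_parent_step edge_in_V by blast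
  ultimately have U: "\<Union>B \<noteq> {}" "finite (\<Union>B)" using finite_V finite_subset by auto
  define m where "m = Max (d r ` \<Union>B)"
  have "m \<in> d r ` \<Union>B" using U by (simp add: m_def)
  then obtain x where x: "x \<in> \<Union>B" and "d r x = m" by blast
  then have max: "d r y \<le> d r x" if "y \<in> \<Union>B" for y using U that by (simp add: m_def)
  have own: "e = {x, bfs_parent r x} \<and> x \<in> V - {r}" if e: "e \<in> B" "x \<in> e" for e
  proof -
    obtain y where y: "y \<in> V - {r}" "e = {y, bfs_parent r y}" using tree_edge e(1) by blast
    have "d r y \<le> d r x" using max e y by blast
    then have "x \<noteq> bfs_parent r y" using bfs_parent_step[of y] y(1) by auto
    then show ?thesis using e y by auto
  qed
  then have x_r: "x \<in> V - {r}" and in_B: "{x, bfs_parent r x} \<in> B" using x by blast+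
  have "{w. {x, w} \<in> B} = {bfs_parent r x}"
  proof (intro equalityI subsetI)
    fix w assume "w \<in> {w. {x, w} \<in> B}"
    then have "{x, w} = {x, bfs_parent r x}" using own by blast
    moreover have "bfs_parent r x \<noteq> x" using bfs_parent_step[of x] x_r edge_irrefl by force
    ultimately show "w \<in> {bfs_parent r x}" by (auto simp: doubleton_eq_iff)
  qed (use in_B in auto)
  then have "edge_degree B x = 1" unfolding edge_degree_def by simp
  then show False using assms(2) unfolding even_degree_def by (metis odd_one)
qed

lemma card_bfs_tree_edge_Int_odd_level:
  assumes "e \<in> bfs_tree r"
  shows "card (e \<inter> odd_level r) = 1"
proof -
  obtain x where x: "x \<in> V - {r}" "e = {x, bfs_parent r x}"
    using assms unfolding bfs_tree_def by blast
  have p: "E x (bfs_parent r x)" "d r (bfs_parent r x) + 1 = d r x" using bfs_parent_step x(1) by auto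
  then have "bfs_parent r x \<in> V" "x \<noteq> bfs_parent r x" using edge_in_V edge_irrefl by metis+
  moreover have "odd (d r x) \<longleftrightarrow> even (d r (bfs_parent r x))" using p(2) by (metis even_Suc Suc_eq_plus1)
  ultimately have "e \<inter> odd_level r = (if odd (d r x) then {x} else {bfs_parent r x})"
    using x unfolding odd_level_def by auto
  then show ?thesis by simp
qed

end

end

section \<open>Shortcuts in bipartite graphs\<close>

locale bipartite_connected_graph = connected_simple_graph +
  fixes colour :: "'a \<Rightarrow> bool"
  assumes colour_edge: "E x y \<Longrightarrow> colour x \<noteq> colour y"
begin

lemma odd_walk_length_iff: "(E ^^ k) x y \<Longrightarrow> odd k \<longleftrightarrow> colour x \<noteq> colour y"
proof (induction k arbitrary: y)
  case (Suc k)
  then obtain z where "(E ^^ k) x z" "E z y" by (auto elim: relpowp_Suc_E)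
  then show ?case using Suc.IH colour_edge by auto
qed simp

lemma odd_gdist_iff: "x \<in> V \<Longrightarrow> y \<in> V \<Longrightarrow> odd (d x y) \<longleftrightarrow> colour x \<noteq> colour y"
  using odd_walk_length_iff relpowp_gdist_V by blast

definition far_side :: "'a \<Rightarrow> 'a \<Rightarrow> 'a set" where
  "far_side a b = {x\<in>V. d x b = d x a + 3}"

lemma far_side_disjoint:
  assumes "a \<in> V" "b \<in> V" "a' \<in> V" "b' \<in> V" "d a b' \<le> 2" "d a' b \<le> 2"
  shows "disjnt (far_side a b) (far_side a' b')"
proof -
  have False if "x \<in> far_side a b" "x \<in> far_side a' b'" for x
  proof -
    have "x \<in> V" using that unfolding far_side_def by blast
    then have "d x b' \<le> d x a + d a b'" "d x b \<le> d x a' + d a' b" using gdist_triangle assms by auto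
    then show False using that assms unfolding far_side_def by auto
  qed
  then show ?thesis unfolding disjnt_def by blast
qed

lemma far_side_swap_disjoint: "disjnt (far_side a b) (far_side b a)"
  unfolding far_side_def disjnt_def by auto

text \<open>d(x,y) and d(x,a) + 1 + d(b,y) have the same parity and differ by at most 2, so a
  walk through the new edge ab gains nothing or exactly 2, and the latter puts x and y on
  the far sides.\<close>
lemma gdist_shortcut_le:
  assumes "a \<in> V" "b \<in> V" "x \<in> V" "y \<in> V" "d a b \<le> 3" "colour a \<noteq> colour b"
    and shortcut: "d x a + d b y + 1 \<le> K"
  shows "real (d x y) - real K \<le> 2 * of_bool (x \<in> far_side a b \<and> y \<in> far_side b a)"
proof (cases "d x y \<le> d x a + d b y + 1")
  case True
  then show ?thesis using shortcut by simp
next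
  case False
  have "d x y \<le> d x a + d a b + d b y"
    using gdist_triangle assms(1-4) by (meson add_mono_thms_linordered_semiring(3) le_trans)
  moreover have "odd (d x y + d x a + d b y)" using odd_gdist_iff assms(1-4,6) by auto
  moreover have "t \<le> p + D + q \<Longrightarrow> D \<le> 3 \<Longrightarrow> \<not> t \<le> p + q + 1 \<Longrightarrow> odd (t + p + q)
      \<Longrightarrow> t = p + q + 3" for t p q D :: nat
    by presburger
  ultimately have long: "d x y = d x a + d b y + 3" using False assms(5) by blast
  have "d x y \<le> d x b + d b y" "d x b \<le> d x a + d a b"
    "d x y \<le> d x a + d a y" "d a y \<le> d a b + d b y"
    using gdist_triangle assms(1-4) by blast+
  then have "d x b = d x a + 3" "d y a = d y b + 3"
    using long assms(5) gdist_sym[OF assms(1,4)] gdist_sym[OF assms(2,4)] by linarith+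
  then have "x \<in> far_side a b" "y \<in> far_side b a" using assms(3,4) unfolding far_side_def by auto
  then show ?thesis using long shortcut by simp
qed

lemma gdist_decrease_le:
  assumes "a \<in> V" "b \<in> V" "x \<in> V" "y \<in> V" "d a b \<le> 3" "colour a \<noteq> colour b"
    and extra: "\<And>u w. E' u w \<Longrightarrow> E u w \<or> (u = a \<and> w = b) \<or> (u = b \<and> w = a)"
    and "\<exists>k. (E' ^^ k) x y"
  shows "real (d x y) - real (gdist E' x y)
     \<le> 2 * (of_bool (x \<in> far_side a b \<and> y \<in> far_side b a)
             + of_bool (x \<in> far_side b a \<and> y \<in> far_side a b))"
proof -
  define K where "K = gdist E' x y"
  have "(E' ^^ K) x y" unfolding K_def using assms(8) by (rule relpowp_gdist)
  then consider "d x y \<le> K" | "d x a + d b y + 1 \<le> K" | "d x b + d a y + 1 \<le> K"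
    using walk_with_extra_edge[OF assms(1-3) extra] by blast
  then show ?thesis
  proof cases
    case 2
    then have "real (d x y) - real K \<le> 2 * of_bool (x \<in> far_side a b \<and> y \<in> far_side b a)"
      using gdist_shortcut_le[OF assms(1-6)] by blast
    then show ?thesis unfolding K_def by simp
  next
    case 3
    moreover have "d b a \<le> 3" using assms(1,2,5) gdist_sym by simp
    ultimately have "real (d x y) - real K \<le> 2 * of_bool (x \<in> far_side b a \<and> y \<in> far_side a b)"
      using gdist_shortcut_le[OF assms(2,1,3,4)] assms(6) by blast
    moreover have "0 \<le> (of_bool (x \<in> far_side a b \<and> y \<in> far_side b a) :: real)" by simp
    ultimately show ?thesis unfolding K_def distrib_left by linarith
  qed (simp add: K_def)
qed

text \<open>Connectivity of E' matters: without a walk, gdist E' x y is an unspecified LEAST.\<close>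
lemma dec_le_far_sides:
  assumes "a \<in> V" "b \<in> V" "d a b \<le> 3" "colour a \<noteq> colour b"
    and extra: "\<And>u w. E' u w \<Longrightarrow> E u w \<or> (u = a \<and> w = b) \<or> (u = b \<and> w = a)"
    and "connected_graph (V - {v}) E'"
  shows "dec V v E E'
     \<le> 2 * real (card ((V - {v}) \<inter> far_side a b)) * real (card ((V - {v}) \<inter> far_side b a))"
proof -
  define W where "W = V - {v}"
  have pairs: "(\<Sum>x\<in>W. \<Sum>y\<in>W. (of_bool (x \<in> A \<and> y \<in> B) :: real))
      = real (card (W \<inter> A)) * real (card (W \<inter> B))" for A B
  proof -
    have "(\<Sum>x\<in>W. \<Sum>y\<in>W. (of_bool (x \<in> A \<and> y \<in> B) :: real))
        = (\<Sum>x\<in>W. of_bool (x \<in> A)) * (\<Sum>y\<in>W. of_bool (y \<in> B))"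
      by (simp add: of_bool_conj sum_product)
    then show ?thesis using finite_V by (simp add: W_def Int_def)
  qed
  have "(\<Sum>x\<in>W. \<Sum>y\<in>W. real (d x y) - real (gdist E' x y))
      \<le> (\<Sum>x\<in>W. \<Sum>y\<in>W. 2 * (of_bool (x \<in> far_side a b \<and> y \<in> far_side b a)
                            + of_bool (x \<in> far_side b a \<and> y \<in> far_side a b)))"
    using assms(6) unfolding connected_graph_def W_def
    by (intro sum_mono gdist_decrease_le[OF assms(1,2) _ _ assms(3,4) extra]) auto
  also have "\<dots> = 2 * ((\<Sum>x\<in>W. \<Sum>y\<in>W. of_bool (x \<in> far_side a b \<and> y \<in> far_side b a))
                     + (\<Sum>x\<in>W. \<Sum>y\<in>W. of_bool (x \<in> far_side b a \<and> y \<in> far_side a b)))"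
    by (simp add: sum.distrib sum_distrib_left)
  also have "\<dots> = 4 * (real (card (W \<inter> far_side a b)) * real (card (W \<inter> far_side b a)))"
    by (simp only: pairs) simp
  finally show ?thesis unfolding dec_def W_def by simp
qed

end

section \<open>Plane quadrangulations are bipartite\<close>

locale plane_quadrangulation =
  fixes V :: "'a set" and E :: "'a \<Rightarrow> 'a \<Rightarrow> bool" and rot :: "'a \<Rightarrow> 'a \<Rightarrow> 'a"
  assumes quadrangulation: "quadrangulation V E rot"

sublocale plane_quadrangulation \<subseteq> connected_simple_graph V E
  using quadrangulation by unfold_locales (auto simp: quadrangulation_def plane_embedding_def)

context plane_quadrangulation
begin

lemma rotation_system: "rotation_system V E rot"
  using quadrangulation unfolding quadrangulation_def plane_embedding_def by blast

lemma euler_formula: "int (card V) - int (card (edges E)) + int (card (faces E rot)) = 2"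
  using quadrangulation unfolding quadrangulation_def plane_embedding_def by blast

lemma face_of_dart:
  assumes "p \<in> darts E"
  shows "(fsucc rot ^^ 4) p = p"
    and "distinct [fst p, fst (fsucc rot p), fst ((fsucc rot ^^ 2) p), fst ((fsucc rot ^^ 3) p)]"
  using assms quadrangulation unfolding quadrangulation_def by blast+

lemma rot_edge: "x \<in> V \<Longrightarrow> E x y \<Longrightarrow> E x (rot x y)"
  using rotation_system unfolding rotation_system_def nbrs_def
  by (metis (mono_tags) bij_betw_apply mem_Collect_eq)

lemma fsucc_in_darts: "p \<in> darts E \<Longrightarrow> fsucc rot p \<in> darts E"
  unfolding darts_def fsucc_def using rot_edge edge_sym edge_in_V by auto

lemma face_of_subset_darts: "p \<in> darts E \<Longrightarrow> face_of rot p \<subseteq> darts E"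
proof -
  assume "p \<in> darts E"
  then have "(fsucc rot ^^ k) p \<in> darts E" for k by (induction k) (simp_all add: fsucc_in_darts)
  then show ?thesis unfolding face_of_def by blast
qed

lemma face_of_eq: "p \<in> darts E \<Longrightarrow>
    face_of rot p = {p, fsucc rot p, (fsucc rot ^^ 2) p, (fsucc rot ^^ 3) p}"
proof -
  assume p: "p \<in> darts E"
  have "(fsucc rot ^^ k) p \<in> {p, fsucc rot p, (fsucc rot ^^ 2) p, (fsucc rot ^^ 3) p}" for k
  proof -
    have "(fsucc rot ^^ k) p = (fsucc rot ^^ (k mod 4)) p"
      using funpow_mod_eq[where f = "fsucc rot" and n = 4 and x = p and m = k] face_of_dart(1)[OF p]
      by simp
    moreover have "k mod 4 < 4" by simp
    then have "k mod 4 = 0 \<or> k mod 4 = 1 \<or> k mod 4 = 2 \<or> k mod 4 = 3" by linarith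
    ultimately show ?thesis by auto
  qed
  moreover have "p = (fsucc rot ^^ 0) p" "fsucc rot p = (fsucc rot ^^ 1) p" by auto
  ultimately show ?thesis unfolding face_of_def by blast
qed

lemma card_face_of: "p \<in> darts E \<Longrightarrow> card (face_of rot p) = 4"
proof -
  assume p: "p \<in> darts E"
  have "distinct [fst p, fst (fsucc rot p), fst ((fsucc rot ^^ 2) p), fst ((fsucc rot ^^ 3) p)]"
    using face_of_dart(2)[OF p] .
  then have "distinct [p, fsucc rot p, (fsucc rot ^^ 2) p, (fsucc rot ^^ 3) p]" by auto
  then show ?thesis using face_of_eq[OF p] by simp
qed

lemma in_face_of_self: "p \<in> face_of rot p"
  unfolding face_of_def by (auto intro: exI[of _ 0])

lemma face_of_subset: "q \<in> face_of rot p \<Longrightarrow> face_of rot q \<subseteq> face_of rot p"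
  unfolding face_of_def by (auto, metis comp_apply funpow_add)

lemma face_of_eq_if_in:
  assumes "p \<in> darts E" "q \<in> face_of rot p"
  shows "face_of rot q = face_of rot p"
proof -
  have "q \<in> darts E" using face_of_subset_darts[OF assms(1)] assms(2) by auto
  then have "card (face_of rot q) = card (face_of rot p)" using card_face_of assms(1) by simp
  moreover have "finite (face_of rot p)" using face_of_eq[OF assms(1)] by simp
  ultimately show ?thesis using face_of_subset[OF assms(2)] by (simp add: card_subset_eq)
qed

lemma face_of_rot: "E y z \<Longrightarrow> face_of rot (z, rot z y) = face_of rot (y, z)"
proof -
  assume "E y z"
  then have "(y, z) \<in> darts E" by (simp add: darts_def)
  moreover have "fsucc rot (y, z) \<in> face_of rot (y, z)" unfolding face_of_def
    by (metis (mono_tags, lifting) funpow_0 funpow_Suc_right comp_apply mem_Collect_eq)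
  ultimately show ?thesis using face_of_eq_if_in by (simp add: fsucc_def)
qed

lemma face_walk_edges:
  assumes "face_walk rot a b c e" and "E a b"
  shows "E b c \<and> E c e \<and> E e a \<and> distinct [a, b, c, e]"
proof -
  have quad: "E p q \<and> E q s \<and> E s t \<and> E t p \<and> distinct [p, q, s, t]"
    if F: "face_of rot f = {(p, q), (q, s), (s, t), (t, p)}"
      and y: "y \<in> face_of rot f" "y \<in> darts E" for f y p q s t
  proof -
    have eq: "face_of rot y = face_of rot f"
    proof -
      have "card (face_of rot f) \<le> 4" unfolding F using card_length[of "[(p,q),(q,s),(s,t),(t,p)]"] by simp
      moreover have "finite (face_of rot f)" using F by simp
      ultimately show ?thesis using face_of_subset[OF y(1)] card_face_of[OF y(2)]
        by (metis antisym card_mono card_subset_eq)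
    qed
    have "fst ` face_of rot y
        = {fst y, fst (fsucc rot y), fst ((fsucc rot ^^ 2) y), fst ((fsucc rot ^^ 3) y)}"
      using face_of_eq[OF y(2)] by auto
    with face_of_dart(2)[OF y(2)] have "card {p, q, s, t} = 4" using eq F by simp
    then have "distinct [p, q, s, t]" by (intro card_distinct) simp
    moreover have "face_of rot f \<subseteq> darts E" using eq face_of_subset_darts[OF y(2)] by simp
    ultimately show ?thesis using F by (auto simp: darts_def)
  qed
  from assms(1) show ?thesis unfolding face_walk_def
  proof
    assume F: "face_of rot (a, b) = {(a, b), (b, c), (c, e), (e, a)}"
    have "(a, b) \<in> darts E" using assms(2) by (simp add: darts_def)
    then show ?thesis using quad[OF F in_face_of_self] by simp
  next
    assume F: "face_of rot (e, c) = {(e, c), (c, b), (b, a), (a, e)}"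
    have "(b, a) \<in> darts E" "(b, a) \<in> face_of rot (e, c)"
      using assms(2) edge_sym F by (auto simp: darts_def)
    then show ?thesis using quad[OF F] edge_sym by auto
  qed
qed

lemma dart_predicate_constant:
  assumes rev: "\<And>u w. E u w \<Longrightarrow> P (u, w) = P (w, u)"
    and turn: "\<And>x y. E x y \<Longrightarrow> P (x, rot x y) = P (x, y)"
    and "p \<in> darts E" "q \<in> darts E"
  shows "P p = P q"
proof -
  have same_tail: "P (x, y) = P (x, z)" if xy: "E x y" and xz: "E x z" for x y z
  proof -
    have x: "x \<in> V" using xy edge_in_V by blast
    obtain k where k: "(rot x ^^ k) y = z"
      using rotation_system x xy xz unfolding rotation_system_def nbrs_def by blast
    have "E x ((rot x ^^ j) y) \<and> P (x, (rot x ^^ j) y) = P (x, y)" for j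
      by (induction j) (use xy turn rot_edge[OF x] in auto)
    from this[of k] show ?thesis using k by simp
  qed
  obtain x0 y0 where p: "p = (x0, y0)" "E x0 y0" using assms(3) by (auto simp: darts_def)
  have along_walk: "(E ^^ k) x0 x \<Longrightarrow> E x y \<Longrightarrow> P (x, y) = P (x0, y0)" for k x y
  proof (induction k arbitrary: x y)
    case 0
    then show ?case using same_tail[of x0 y y0] p(2) by simp
  next
    case (Suc k)
    then obtain z where z: "(E ^^ k) x0 z" "E z x" by (auto elim: relpowp_Suc_E)
    have "P (x, y) = P (x, z)" using same_tail Suc.prems(2) edge_sym[OF z(2)] .
    also have "\<dots> = P (z, x)" using rev[OF edge_sym[OF z(2)]] .
    also have "\<dots> = P (x0, y0)" using Suc.IH[OF z] .
    finally show ?case .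
  qed
  obtain x y where q: "q = (x, y)" "E x y" using assms(4) by (auto simp: darts_def)
  moreover have "x0 \<in> V" "x \<in> V" using p(2) q(2) edge_in_V by blast+
  ultimately obtain k where "(E ^^ k) x0 x" using walk_exists by blast
  then show ?thesis using along_walk q p by simp
qed

definition face_boundary :: "('a \<times> 'a) set set \<Rightarrow> 'a set set" where
  "face_boundary S =
     {{u, w} | u w. E u w \<and> (face_of rot (u, w) \<in> S) \<noteq> (face_of rot (w, u) \<in> S)}"

lemma mem_face_boundary:
  "E u w \<Longrightarrow> {u, w} \<in> face_boundary S \<longleftrightarrow> (face_of rot (u, w) \<in> S) \<noteq> (face_of rot (w, u) \<in> S)"
  unfolding face_boundary_def by (auto simp: doubleton_eq_iff)

lemma face_boundary_subset_edges: "face_boundary S \<subseteq> edges E"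
  unfolding face_boundary_def edges_def by auto

lemma face_boundary_sym_diff:
  "face_boundary ((S - S') \<union> (S' - S))
     = (face_boundary S - face_boundary S') \<union> (face_boundary S' - face_boundary S)"
proof -
  have "e \<in> face_boundary ((S - S') \<union> (S' - S))
      \<longleftrightarrow> e \<in> (face_boundary S - face_boundary S') \<union> (face_boundary S' - face_boundary S)"
    if "e \<in> edges E" for e
    using that by (auto elim!: edgesE simp: mem_face_boundary)
  then show ?thesis using face_boundary_subset_edges by blast
qed

lemma face_boundary_empty:
  assumes "S \<subseteq> faces E rot" and "face_boundary S = {}"
  shows "S = {} \<or> S = faces E rot"
proof -
  have const: "face_of rot p \<in> S \<longleftrightarrow> face_of rot q \<in> S" if "p \<in> darts E" "q \<in> darts E" for p q
  proof (rule dart_predicate_constant[OF _ _ that])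
    show "(face_of rot (u, w) \<in> S) = (face_of rot (w, u) \<in> S)" if "E u w" for u w
      using assms(2) mem_face_boundary[OF that, of S] by simp
    show "(face_of rot (x, rot x y) \<in> S) = (face_of rot (x, y) \<in> S)" if "E x y" for x y
      using face_of_rot[OF edge_sym[OF that]] assms(2) mem_face_boundary[OF that, of S] by simp
  qed
  show ?thesis
  proof (cases "S = {}")
    case False
    then obtain p where p: "p \<in> darts E" "face_of rot p \<in> S"
      using assms(1) unfolding faces_def by blast
    have "faces E rot \<subseteq> S" unfolding faces_def using const[OF p(1)] p(2) by blast
    then show ?thesis using assms(1) by blast
  qed simp
qed

text \<open>Around each vertex the rotation is a cyclic permutation, and the boundary edges at
  it are where membership of consecutive faces in S changes.\<close>
lemma even_degree_face_boundary: "even_degree (face_boundary S)"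
  unfolding even_degree_def edge_degree_def
proof
  fix z
  show "even (card {y. {z, y} \<in> face_boundary S})"
  proof (cases "z \<in> V")
    case False
    then have "{y. {z, y} \<in> face_boundary S} = {}"
      using face_boundary_subset_edges doubleton_in_edges_iff edge_in_V by blast
    then show ?thesis by simp
  next
    case True
    have "{z, y} \<in> face_boundary S
        \<longleftrightarrow> y \<in> nbrs E z \<and> (face_of rot (z, y) \<in> S) \<noteq> (face_of rot (z, rot z y) \<in> S)" for y
    proof (cases "E z y")
      case True
      then show ?thesis using mem_face_boundary face_of_rot[OF edge_sym[OF True]] by (simp add: nbrs_def)
    next
      case False
      then show ?thesis using face_boundary_subset_edges doubleton_in_edges_iff by (auto simp: nbrs_def)
    qed
    then have "{y. {z, y} \<in> face_boundary S}
        = {y \<in> nbrs E z. (face_of rot (z, y) \<in> S) \<noteq> (face_of rot (z, rot z y) \<in> S)}"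
      by blast
    moreover have "finite (nbrs E z)"
      using finite_V edge_in_V unfolding nbrs_def by (metis (no_types) finite_subset mem_Collect_eq subsetI)
    moreover have "bij_betw (rot z) (nbrs E z) (nbrs E z)"
      using rotation_system True unfolding rotation_system_def by blast
    ultimately show ?thesis
      using even_card_disagreements[where f = "\<lambda>y. face_of rot (z, y) \<in> S"] by simp
  qed
qed

lemma finite_darts: "finite (darts E)"
proof -
  have "darts E \<subseteq> V \<times> V" unfolding darts_def using edge_in_V by auto
  then show "finite (darts E)" using finite_V finite_subset by blast
qed

lemma finite_faces: "finite (faces E rot)"
  unfolding faces_def using finite_darts by simp

lemma pairwise_disjnt_faces: "pairwise disjnt (faces E rot)"
  unfolding pairwise_def disjnt_def
proof (intro ballI impI)
  fix f1 f2 assume f: "f1 \<in> faces E rot" "f2 \<in> faces E rot" "f1 \<noteq> f2"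
  then obtain p1 p2 where p: "p1 \<in> darts E" "f1 = face_of rot p1" "p2 \<in> darts E" "f2 = face_of rot p2"
    unfolding faces_def by blast
  show "f1 \<inter> f2 = {}"
  proof (rule ccontr)
    assume "f1 \<inter> f2 \<noteq> {}"
    then obtain x where "x \<in> f1" "x \<in> f2" by blast
    then show False using face_of_eq_if_in p f(3) by metis
  qed
qed

lemma card_darts_in_faces:
  assumes "S \<subseteq> faces E rot"
  shows "card {p\<in>darts E. face_of rot p \<in> S} = 4 * card S"
proof -
  have darts_eq: "{p\<in>darts E. face_of rot p \<in> S} = \<Union>S"
  proof (intro equalityI subsetI)
    fix p assume "p \<in> {p\<in>darts E. face_of rot p \<in> S}"
    then show "p \<in> \<Union>S" using in_face_of_self by blast
  next
    fix p assume "p \<in> \<Union>S"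
    then obtain f where f: "f \<in> S" "p \<in> f" by blast
    then obtain q where q: "q \<in> darts E" "f = face_of rot q" using assms unfolding faces_def by blast
    then have "p \<in> darts E" "face_of rot p = f"
      using face_of_subset_darts[OF q(1)] face_of_eq_if_in[OF q(1)] f(2) by auto
    then show "p \<in> {p\<in>darts E. face_of rot p \<in> S}" using f by simp
  qed
  have "card (\<Union>S) = sum card S"
    using assms card_face_of face_of_eq pairwise_subset[OF pairwise_disjnt_faces assms]
    unfolding faces_def by (intro card_Union_disjoint) auto
  also have "\<dots> = (\<Sum>f\<in>S. 4)"
    using assms card_face_of unfolding faces_def by (intro sum.cong) auto
  finally show ?thesis using darts_eq by simp
qed

text \<open>Every face has 4 darts, and an edge lies in the boundary iff an odd number of its
  two darts lie in faces of S.\<close>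
lemma even_card_face_boundary:
  assumes "S \<subseteq> faces E rot"
  shows "even (card (face_boundary S))"
proof -
  define DS where "DS = {p\<in>darts E. face_of rot p \<in> S}"
  define over where "over e = {p\<in>DS. {fst p, snd p} = e}" for e
  have odd_over: "odd (card (over e)) \<longleftrightarrow> e \<in> face_boundary S" if edge: "e \<in> edges E" for e
  proof -
    obtain u w where e: "e = {u, w}" "E u w" using edge by (blast elim: edgesE)
    then have "u \<noteq> w" using edge_irrefl by blast
    have "over e = ({(u, w)} \<inter> DS) \<union> ({(w, u)} \<inter> DS)"
      unfolding over_def e by (auto simp: doubleton_eq_iff)
    also have "card \<dots> = card ({(u, w)} \<inter> DS) + card ({(w, u)} \<inter> DS)"
      using \<open>u \<noteq> w\<close> by (intro card_Un_disjoint) auto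
    finally have "card (over e) = card ({(u, w)} \<inter> DS) + card ({(w, u)} \<inter> DS)" .
    moreover have "(u, w) \<in> DS \<longleftrightarrow> face_of rot (u, w) \<in> S" "(w, u) \<in> DS \<longleftrightarrow> face_of rot (w, u) \<in> S"
      unfolding DS_def darts_def using e(2) edge_sym by auto
    ultimately show ?thesis using mem_face_boundary[OF e(2)] e(1)
      by (cases "(u, w) \<in> DS"; cases "(w, u) \<in> DS") auto
  qed
  have "DS = (\<Union>e\<in>edges E. over e)" unfolding DS_def over_def edges_def darts_def by (auto, blast)
  moreover have "card (\<Union>e\<in>edges E. over e) = (\<Sum>e\<in>edges E. card (over e))"
    using finite_edges finite_darts by (intro card_UN_disjoint) (auto simp: over_def DS_def)
  ultimately have "card DS = (\<Sum>e\<in>edges E. card (over e))" by simp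
  moreover have "even (card DS)" using card_darts_in_faces[OF assms] unfolding DS_def by simp
  ultimately have "even (card {e\<in>edges E. odd (card (over e))})"
    using even_sum_iff[OF finite_edges] by metis
  moreover have "{e\<in>edges E. odd (card (over e))} = face_boundary S"
    using odd_over face_boundary_subset_edges by blast
  ultimately show ?thesis by simp
qed

lemma card_Pow_faces_le: "card (Pow (faces E rot)) \<le> 2 * card (face_boundary ` Pow (faces E rot))"
proof -
  have fin: "finite (face_boundary ` Pow (faces E rot))" using finite_faces by simp
  have "Pow (faces E rot) = (\<Union>A\<in>face_boundary ` Pow (faces E rot). {S\<in>Pow (faces E rot). face_boundary S = A})"
    by blast
  then have "card (Pow (faces E rot))
      \<le> (\<Sum>A\<in>face_boundary ` Pow (faces E rot). card {S\<in>Pow (faces E rot). face_boundary S = A})"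
    using card_UN_le[OF fin, of "\<lambda>A. {S\<in>Pow (faces E rot). face_boundary S = A}"] by simp
  also have "\<dots> \<le> (\<Sum>A\<in>face_boundary ` Pow (faces E rot). 2)"
  proof (rule sum_mono)
    fix A assume "A \<in> face_boundary ` Pow (faces E rot)"
    then obtain S0 where S0: "S0 \<subseteq> faces E rot" "A = face_boundary S0" by blast
    have "{S\<in>Pow (faces E rot). face_boundary S = A} \<subseteq> {S0, faces E rot - S0}"
    proof
      fix S assume S: "S \<in> {S\<in>Pow (faces E rot). face_boundary S = A}"
      then have "face_boundary ((S - S0) \<union> (S0 - S)) = {}" "(S - S0) \<union> (S0 - S) \<subseteq> faces E rot"
        using face_boundary_sym_diff S0 by auto
      then have "(S - S0) \<union> (S0 - S) = {} \<or> (S - S0) \<union> (S0 - S) = faces E rot"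
        using face_boundary_empty by blast
      then show "S \<in> {S0, faces E rot - S0}" using S S0 by blast
    qed
    then have "card {S\<in>Pow (faces E rot). face_boundary S = A} \<le> card {S0, faces E rot - S0}"
      by (intro card_mono) simp_all
    also have "\<dots> \<le> 2" by (simp add: card_insert_if)
    finally show "card {S\<in>Pow (faces E rot). face_boundary S = A} \<le> 2" .
  qed
  finally show ?thesis by simp
qed

text \<open>Since boundaries are even edge sets, and the only even subset of a spanning tree is
  empty, A \<mapsto> A - T is injective on boundaries; Euler's formula makes the count of boundaries
  at least 2^(|E| - |T|), so every set of non-tree edges is hit.\<close>
lemma face_boundary_mod_bfs_tree_surj:
  assumes "r \<in> V" and "Z \<subseteq> edges E - bfs_tree r"
  shows "\<exists>S\<subseteq>faces E rot. face_boundary S - bfs_tree r = Z"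
proof -
  define T where "T = bfs_tree r"
  define B where "B = face_boundary ` Pow (faces E rot)"
  have inj: "inj_on (\<lambda>A. A - T) B"
  proof (rule inj_onI)
    fix A A' assume "A \<in> B" "A' \<in> B" and eq: "A - T = A' - T"
    then obtain S S' where S: "A = face_boundary S" "A' = face_boundary S'" unfolding B_def by blast
    have "face_boundary ((S - S') \<union> (S' - S)) = (A - A') \<union> (A' - A)"
      using face_boundary_sym_diff S by simp
    moreover have "(A - A') \<union> (A' - A) \<subseteq> T" using eq by blast
    ultimately have "(A - A') \<union> (A' - A) = {}"
      using even_degree_subset_bfs_tree[OF assms(1)] even_degree_face_boundary unfolding T_def by metis
    then show "A = A'" by blast
  qed
  have image_sub: "(\<lambda>A. A - T) ` B \<subseteq> Pow (edges E - T)"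
    unfolding B_def using face_boundary_subset_edges by blast
  have T_sub: "T \<subseteq> edges E" unfolding T_def using bfs_tree_subset_edges[OF assms(1)] .
  have "card V \<ge> 1" using assms(1) finite_V by (metis One_nat_def Suc_leI card_gt_0_iff empty_iff)
  moreover have "card T \<le> card (edges E)" using card_mono[OF finite_edges T_sub] .
  ultimately have "int (card (faces E rot)) = int (card (edges E) - card T) + 1"
    using euler_formula card_bfs_tree[OF assms(1)] unfolding T_def by linarith
  then have "card (faces E rot) = (card (edges E) - card T) + 1" by linarith
  then have "card (Pow (faces E rot)) = 2 * 2 ^ (card (edges E) - card T)"
    using finite_faces by (simp add: card_Pow)
  moreover have "card (Pow (edges E - T)) = 2 ^ (card (edges E) - card T)"
    using finite_edges T_sub by (simp add: card_Pow card_Diff_subset finite_subset)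
  ultimately have "card (Pow (edges E - T)) \<le> card B"
    using card_Pow_faces_le unfolding B_def by simp
  also have "card B = card ((\<lambda>A. A - T) ` B)" using card_image[OF inj] by simp
  finally have "card (Pow (edges E - T)) \<le> card ((\<lambda>A. A - T) ` B)" .
  then have "(\<lambda>A. A - T) ` B = Pow (edges E - T)"
    using finite_edges by (intro card_seteq[OF _ image_sub]) simp_all
  then have "Z \<in> (\<lambda>A. A - T) ` B" using assms(2) unfolding T_def by blast
  then show ?thesis unfolding B_def T_def by blast
qed

text \<open>An edge inside one parity class of BFS levels would be the only edge of an even
  boundary not meeting the odd levels exactly once, contradicting the handshake lemma.\<close>
theorem gdist_parity_edge:
  assumes "r \<in> V" and "E x y"
  shows "odd (d r x) \<noteq> odd (d r y)"
proof
  assume same: "odd (d r x) = odd (d r y)"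
  define e where "e = {x, y}"
  define L where "L = odd_level r"
  have "x \<noteq> y" "x \<in> V" "y \<in> V" using assms(2) edge_irrefl edge_in_V by metis+
  then have e_even: "even (card (e \<inter> L))"
    using same unfolding e_def L_def odd_level_def by (cases "odd (d r x)") (auto simp: Int_absorb2)
  have tree_odd: "odd (card (e' \<inter> L))" if "e' \<in> bfs_tree r" for e'
    using card_bfs_tree_edge_Int_odd_level[OF assms(1) that] unfolding L_def by simp
  have "e \<in> edges E" unfolding e_def using assms(2) doubleton_in_edges_iff by simp
  moreover have "e \<notin> bfs_tree r" using e_even tree_odd by blast
  ultimately obtain S where S: "S \<subseteq> faces E rot" "face_boundary S - bfs_tree r = {e}"
    using face_boundary_mod_bfs_tree_surj[OF assms(1), of "{e}"] by blast
  define A where "A = face_boundary S"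
  have e_A: "e \<in> A" using S unfolding A_def by blast
  have finA: "finite A"
    using finite_edges face_boundary_subset_edges finite_subset unfolding A_def by blast
  have "{e'\<in>A. odd (card (e' \<inter> L))} = A - {e}"
  proof (intro equalityI subsetI)
    fix e' assume "e' \<in> {e'\<in>A. odd (card (e' \<inter> L))}"
    then show "e' \<in> A - {e}" using e_even by auto
  next
    fix e' assume e': "e' \<in> A - {e}"
    then have "e' \<in> bfs_tree r" using S unfolding A_def by blast
    then show "e' \<in> {e'\<in>A. odd (card (e' \<inter> L))}" using e' tree_odd by simp
  qed
  moreover have "finite L" unfolding L_def odd_level_def using finite_V by simp
  then have "even (card {e'\<in>A. odd (card (e' \<inter> L))})"
    unfolding A_def by (rule even_card_edges_crossing[OF face_boundary_subset_edges even_degree_face_boundary])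
  moreover have "even (card A)" using even_card_face_boundary[OF S(1)] unfolding A_def .
  moreover have "Suc (card (A - {e})) = card A" using card_Suc_Diff1[OF finA e_A] .
  ultimately show False by (metis even_Suc)
qed

lemma bipartite_connected_graph:
  "r \<in> V \<Longrightarrow> bipartite_connected_graph V E (\<lambda>x. odd (d r x))"
  by unfold_locales (metis gdist_parity_edge)

end

section \<open>A vertex of degree 3\<close>

text \<open>The vertex v of degree 3 with its three incident faces v1 v v3 v4, v2 v v3 v5 and
  v1 v v2 v6; the new edges e1, e2, e3 join the opposite corners (v1,v5), (v2,v4), (v3,v6)
  of the hexagon v1 v6 v2 v5 v3 v4 around v.\<close>
locale degree3_vertex = plane_quadrangulation +
  fixes v v1 v2 v3 v4 v5 v6 :: 'a
  assumes v_in_V: "v \<in> V" and nbrs_v: "nbrs E v = {v1, v2, v3}"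
    and face1: "face_walk rot v1 v v3 v4"
    and face2: "face_walk rot v2 v v3 v5"
    and face3: "face_walk rot v1 v v2 v6"
begin

sublocale bipartite_connected_graph V E "\<lambda>x. odd (d v x)"
  by (rule bipartite_connected_graph[OF v_in_V])

lemma hexagon_edges:
  "E v1 v" "E v2 v" "E v3 v" "E v3 v4" "E v4 v1" "E v3 v5" "E v5 v2" "E v2 v6" "E v6 v1"
  and hexagon_ne_v: "v4 \<noteq> v" "v6 \<noteq> v"
proof -
  show v: "E v1 v" "E v2 v" "E v3 v" using nbrs_v edge_sym unfolding nbrs_def by auto
  show "E v3 v4" "E v4 v1" "v4 \<noteq> v" using face_walk_edges[OF face1 v(1)] by auto
  show "E v3 v5" "E v5 v2" using face_walk_edges[OF face2 v(2)] by auto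
  show "E v2 v6" "E v6 v1" "v6 \<noteq> v" using face_walk_edges[OF face3 v(1)] by auto
qed

lemma hexagon_in_V: "v1 \<in> V" "v2 \<in> V" "v3 \<in> V" "v4 \<in> V" "v5 \<in> V" "v6 \<in> V"
  using hexagon_edges edge_in_V by blast+

lemma hexagon_near:
  "d v1 v2 \<le> 2" "d v1 v3 \<le> 2" "d v1 v4 \<le> 2" "d v1 v6 \<le> 2"
  "d v5 v2 \<le> 2" "d v5 v3 \<le> 2" "d v5 v4 \<le> 2" "d v5 v6 \<le> 2"
  "d v2 v3 \<le> 2" "d v2 v6 \<le> 2" "d v4 v3 \<le> 2" "d v4 v6 \<le> 2"
  using hexagon_edges gdist_edge[of v1 v4] gdist_edge[of v1 v6] gdist_edge[of v5 v2]
    gdist_edge[of v5 v3] gdist_edge[of v2 v6] gdist_edge[of v4 v3]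
    gdist_path2[of v1 v v2] gdist_path2[of v1 v v3] gdist_path2[of v5 v3 v4]
    gdist_path2[of v5 v2 v6] gdist_path2[of v2 v v3] gdist_path2[of v4 v1 v6]
  by (auto dest: edge_sym)

lemma connected_del_add: "connected_graph (V - {v}) (del_add E v a b)"
proof (rule connected_graph_delete_vertex)
  show "v1 \<in> V - {v}" using hexagon_in_V hexagon_edges edge_irrefl by blast
  show "symp (del_add E v a b)" unfolding symp_def del_add_def using edge_sym by blast
  show "del_add E v a b x y" if "E x y" "x \<noteq> v" "y \<noteq> v" for x y
    using that unfolding del_add_def by blast
  show "\<exists>k. (del_add E v a b ^^ k) u v1" if "E u v" "u \<noteq> v1" for u
  proof -
    have "u = v2 \<or> u = v3" using that nbrs_v edge_sym unfolding nbrs_def by blast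
    moreover have "v1 \<noteq> v" "v2 \<noteq> v" "v3 \<noteq> v" using hexagon_edges edge_irrefl by metis+
    ultimately obtain w where "del_add E v a b u w" "del_add E v a b w v1"
      using hexagon_edges hexagon_ne_v unfolding del_add_def by blast
    then have "(del_add E v a b ^^ Suc (Suc 0)) u v1" by (meson relpowp_0_I relpowp_Suc_I)
    then show ?thesis by blast
  qed
qed

lemma dec_del_add_le:
  assumes "(a, b) \<in> {(v1, v5), (v2, v4), (v3, v6)}"
  shows "dec V v E (del_add E v a b)
    \<le> 2 * real (card ((V - {v}) \<inter> far_side a b)) * real (card ((V - {v}) \<inter> far_side b a))"
proof (rule dec_le_far_sides[OF _ _ _ _ _ connected_del_add])
  show "a \<in> V" "b \<in> V" using assms hexagon_in_V by auto
  have parity: "odd (d v x) \<noteq> odd (d v y)" if "E x y" for x y using colour_edge[OF that] by simp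
  have "odd (d v v1)" "odd (d v v2)" "odd (d v v3)"
    using parity hexagon_edges(1-3) gdist_self by auto
  moreover have "even (d v v4)" "even (d v v5)" "even (d v v6)"
    using parity[OF hexagon_edges(4)] parity[OF hexagon_edges(6)] parity[OF hexagon_edges(8)]
      calculation by auto
  ultimately show "odd (d v a) \<noteq> odd (d v b)" using assms by auto
  have "d v1 v5 \<le> 3" "d v2 v4 \<le> 3" "d v3 v6 \<le> 3"
    using gdist_path3[OF hexagon_edges(1) edge_sym[OF hexagon_edges(3)] hexagon_edges(6)]
      gdist_path3[OF hexagon_edges(2) edge_sym[OF hexagon_edges(3)] hexagon_edges(4)]
      gdist_path3[OF hexagon_edges(3) edge_sym[OF hexagon_edges(1)] edge_sym[OF hexagon_edges(9)]]
    by simp_all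
  then show "d a b \<le> 3" using assms by auto
  show "E a' b' \<or> (a' = a \<and> b' = b) \<or> (a' = b \<and> b' = a)" if "del_add E v a b a' b'" for a' b'
    using that unfolding del_add_def by blast
qed

lemma far_sides_card_sum_le:
  "(\<Sum>A\<leftarrow>[far_side v1 v5, far_side v5 v1, far_side v2 v4, far_side v4 v2, far_side v3 v6,
         far_side v6 v3]. card ((V - {v}) \<inter> A)) \<le> card (V - {v})"
proof (rule sum_list_card_Int_le)
  show "finite (V - {v})" using finite_V by simp
  have near_sym: "d y x \<le> 2" if "d x y \<le> 2" "x \<in> V" "y \<in> V" for x y
    using that gdist_sym by simp
  show "sorted_wrt disjnt [far_side v1 v5, far_side v5 v1, far_side v2 v4, far_side v4 v2,
      far_side v3 v6, far_side v6 v3]"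
    by (simp add: far_side_swap_disjoint)
      (intro conjI far_side_disjoint;
        (rule hexagon_in_V hexagon_near | rule near_sym, rule hexagon_near, rule hexagon_in_V, rule hexagon_in_V))
qed

end

text \<open>The hypotheses mindeg, dist3 and good only serve to make each G_i a quadrangulation
  again; the bound does not need them.\<close>
theorem claim1:
  fixes V :: "'a set" and E :: "'a \<Rightarrow> 'a \<Rightarrow> bool" and rot :: "'a \<Rightarrow> 'a \<Rightarrow> 'a"
    and v v1 v2 v3 v4 v5 v6 :: 'a
  assumes quad: "quadrangulation V E rot"
    and mindeg: "\<forall>x\<in>V. card (nbrs E x) \<ge> 3"
    and vV: "v \<in> V"
    and Nv: "nbrs E v = {v1, v2, v3}" and dist3: "distinct [v1, v2, v3]"
    and f1: "face_walk rot v1 v v3 v4"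
    and f2: "face_walk rot v2 v v3 v5"
    and f3: "face_walk rot v1 v v2 v6"
    and good: "\<not> E v1 v5" "\<not> E v2 v4" "\<not> E v3 v6"
  shows "Min {dec V v E (del_add E v v1 v5), dec V v E (del_add E v v2 v4),
              dec V v E (del_add E v v3 v6)} \<le> (real (card V) - 1)^2 / 18"
proof -
  interpret degree3_vertex V E rot v v1 v2 v3 v4 v5 v6
    using quad vV Nv f1 f2 f3 by unfold_locales
  define p where "p a b = real (card ((V - {v}) \<inter> far_side a b))" for a b
  have "p v1 v5 + p v5 v1 + p v2 v4 + p v4 v2 + p v3 v6 + p v6 v3 \<le> real (card (V - {v}))"
    using far_sides_card_sum_le unfolding p_def by (simp flip: of_nat_add)
  also have "\<dots> = real (card V) - 1"
  proof -
    have "1 \<le> card V" using vV finite_V by (metis One_nat_def Suc_leI card_gt_0_iff empty_iff)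
    then show ?thesis using vV finite_V by (simp add: of_nat_diff)
  qed
  finally have "min (2 * p v1 v5 * p v5 v1) (min (2 * p v2 v4 * p v4 v2) (2 * p v3 v6 * p v6 v3))
      \<le> (real (card V) - 1)\<^sup>2 / 18"
    by (intro min_three_products_le) (simp_all add: p_def)
  moreover have "dec V v E (del_add E v v1 v5) \<le> 2 * p v1 v5 * p v5 v1"
    "dec V v E (del_add E v v2 v4) \<le> 2 * p v2 v4 * p v4 v2"
    "dec V v E (del_add E v v3 v6) \<le> 2 * p v3 v6 * p v6 v3"
    using dec_del_add_le unfolding p_def by simp_all
  ultimately have "min (dec V v E (del_add E v v1 v5))
      (min (dec V v E (del_add E v v2 v4)) (dec V v E (del_add E v v3 v6)))
      \<le> (real (card V) - 1)\<^sup>2 / 18"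
    by (meson min.mono order_trans)
  then show ?thesis by simp
qed

end
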